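(* Let $G$ be a graph, $P$ a non-trivial prime graph in a split decomposition of $G$, $k$ a positive integer, and $(T,\delta)$ a branch decomposition of $G$ of sm-width less than $k$. Let $a\in V(P)$ and let $(X,Y)$ be a cut of $G$ induced by an edge of $T$. If $|X\cap\operatorname{act}(a:P)|\ge k$ and $|Y\cap \operatorname{act}(N_P(a):P)|\ge k$, then $(X,Y)$ is a split of $G$.
   Context: Graphs are finite, simple, undirected; $\overline{A}=V(G)\setminus A$; $N(S)=N_G(S)=(\bigcup_{v\in S}N(v))\setminus S$; $G[A,B]$ is the bipartite graph on $A\cup B$ with the edges of $G$ between $A$ and $B$. A split of a connected graph $G$ is a partition $(V_1,V_2)$ of $V(G)$ with $|V_1|,|V_2|\ge2$ such that every vertex of $V_1$ with a neighbour in $V_2$ has the same neighbourhood in $V_2$. $\operatorname{mm}(A)$ is the maximum size of a matching in $G[A,\overline A]$, and $\operatorname{sm}(A)=1$ if $(A,\overline A)$ is a split of $G$, otherwise $\operatorname{sm}(A)=\operatorname{mm}(A)$. A branch decomposition $(T,\delta)$ of $G$ is a tree $T$ of maximum degree $3$ with a bijection $\delta$ from the leaves of $T$ to $V(G)$; each edge $e$ of $T$ induces the cut $(A,\overline A)$ where $A$ is the set of $\delta$-images of the leaves in one component of $T-e$. The sm-width of $(T,\delta)$ is the maximum of $\operatorname{sm}(A)$ over cuts induced by edges of $T$; the sm-width $\operatorname{smw}(G)$ of $G$ is the minimum over all branch decompositions. Split decomposition: decomposing along a split $(V_1,V_2)$ gives $G_1=G[V_1]$ plus a new marker $v$ adjacent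 to $N_G(V_2)$ and $G_2=G[V_2]$ plus the same marker adjacent to $N_G(V_1)$; a graph with no split is prime, non-trivial if it has more than 3 vertices; a split decomposition recursively decomposes until all parts are prime, with the split decomposition tree having prime graphs as nodes adjacent iff they share a marker. For $v\in V(G_i)$ ($G_i$ a prime graph of the decomposition), $\operatorname{tot}(v:G_i)=\{v\}$ if $v\in V(G)$, and otherwise (marker shared with $G_j$) the set of vertices of $V(G)$ in the prime graphs of the component of the tree minus $G_i$ containing $G_j$. $\operatorname{act}(v:G_i)=N_G(V(G)\setminus \operatorname{tot}(v:G_i))$, and for $V'\subseteq V(G_i)$, $\operatorname{act}(V':G_i)=\bigcup_{v\in V'}\operatorname{act}(v:G_i)$. *)

theory Defs
  imports Main
begin

text \<open>A graph is a pair (vertex set, edge relation); edges are stored as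
  ordered pairs in both directions (symmetric, irreflexive, within V).\<close>
type_synonym 'v graph = "'v set \<times> ('v \<times> 'v) set"

definition graph :: "'v graph \<Rightarrow> bool" where
  "graph G \<longleftrightarrow> finite (fst G) \<and> snd G \<subseteq> fst G \<times> fst G \<and> sym (snd G)
     \<and> (\<forall>x. (x, x) \<notin> snd G)"

definition nbr :: "'v graph \<Rightarrow> 'v \<Rightarrow> 'v set" where
  "nbr G v = {u. (v, u) \<in> snd G}"

definition nbrs :: "'v graph \<Rightarrow> 'v set \<Rightarrow> 'v set" where
  "nbrs G S = (\<Union>v\<in>S. nbr G v) - S"

definition connected :: "'v graph \<Rightarrow> bool" where
  "connected G \<longleftrightarrow> (\<forall>x\<in>fst G. \<forall>y\<in>fst G. (x, y) \<in> (snd G)\<^sup>*)"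

definition is_split :: "'v graph \<Rightarrow> 'v set \<Rightarrow> 'v set \<Rightarrow> bool" where
  "is_split G V1 V2 \<longleftrightarrow> connected G \<and> V1 \<union> V2 = fst G \<and> V1 \<inter> V2 = {}
     \<and> card V1 \<ge> 2 \<and> card V2 \<ge> 2
     \<and> (\<forall>x\<in>V1. \<forall>y\<in>V1. nbr G x \<inter> V2 \<noteq> {} \<and> nbr G y \<inter> V2 \<noteq> {}
            \<longrightarrow> nbr G x \<inter> V2 = nbr G y \<inter> V2)"

definition prime_graph :: "'v graph \<Rightarrow> bool" where
  "prime_graph H \<longleftrightarrow> \<not> (\<exists>V1 V2. is_split H V1 V2)"

definition cross_matching :: "'v graph \<Rightarrow> 'v set \<Rightarrow> ('v \<times> 'v) set \<Rightarrow> bool" where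
  "cross_matching G A M \<longleftrightarrow>
     (\<forall>(x, y)\<in>M. (x, y) \<in> snd G \<and> x \<in> A \<and> y \<in> fst G - A)
     \<and> (\<forall>(x, y)\<in>M. \<forall>(x', y')\<in>M. x = x' \<longleftrightarrow> y = y')"

definition mm :: "'v graph \<Rightarrow> 'v set \<Rightarrow> nat" where
  "mm G A = Max {card M | M. cross_matching G A M}"

definition sm :: "'v graph \<Rightarrow> 'v set \<Rightarrow> nat" where
  "sm G A = (if is_split G A (fst G - A) then 1 else mm G A)"

definition is_cycle :: "'v graph \<Rightarrow> 'v list \<Rightarrow> bool" where
  "is_cycle T xs \<longleftrightarrow> length xs \<ge> 3 \<and> distinct xs \<and> set xs \<subseteq> fst T
     \<and> (\<forall>i < length xs. (xs ! i, xs ! ((i + 1) mod length xs)) \<in> snd T)"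

definition tree :: "'v graph \<Rightarrow> bool" where
  "tree T \<longleftrightarrow> graph T \<and> fst T \<noteq> {} \<and> connected T \<and> \<not> (\<exists>xs. is_cycle T xs)"

definition degree :: "'v graph \<Rightarrow> 'v \<Rightarrow> nat" where
  "degree T v = card (nbr T v)"

definition leaves :: "'v graph \<Rightarrow> 'v set" where
  "leaves T = {v \<in> fst T. degree T v \<le> 1}"

definition branch_decomposition :: "'a graph \<Rightarrow> 't graph \<Rightarrow> ('t \<Rightarrow> 'a) \<Rightarrow> bool" where
  "branch_decomposition G T \<delta> \<longleftrightarrow> tree T \<and> (\<forall>v\<in>fst T. degree T v \<le> 3)
     \<and> bij_betw \<delta> (leaves T) (fst G)"

definition edge_cut :: "'t graph \<Rightarrow> ('t \<Rightarrow> 'a) \<Rightarrow> 't \<Rightarrow> 't \<Rightarrow> 'a set" where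
  "edge_cut T \<delta> u v =
     \<delta> ` (leaves T \<inter> {w. (u, w) \<in> (snd T - {(u, v), (v, u)})\<^sup>*})"

definition branch_smw :: "'a graph \<Rightarrow> 't graph \<Rightarrow> ('t \<Rightarrow> 'a) \<Rightarrow> nat" where
  "branch_smw G T \<delta> = Max ({sm G (edge_cut T \<delta> u v) | u v. (u, v) \<in> snd T} \<union> {0})"

text \<open>Vertices of the graphs of a split decomposition of G :: 'a graph are of type
  'a + nat: original vertices are Inl x, marker vertices are Inr m.\<close>
definition lift :: "'a graph \<Rightarrow> ('a + nat) graph" where
  "lift G = (Inl ` fst G, map_prod Inl Inl ` snd G)"

definition split_part :: "('a + nat) graph \<Rightarrow> ('a + nat) set \<Rightarrow> ('a + nat) set \<Rightarrow> nat
    \<Rightarrow> ('a + nat) graph" where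
  "split_part H V1 V2 m =
     (insert (Inr m) V1,
      (snd H \<inter> (V1 \<times> V1)) \<union> {(Inr m, x) | x. x \<in> nbrs H V2}
        \<union> {(x, Inr m) | x. x \<in> nbrs H V2})"

inductive split_dec :: "'a graph \<Rightarrow> ('a + nat) graph set \<Rightarrow> bool" for G where
  init: "split_dec G {lift G}"
| step: "split_dec G D \<Longrightarrow> H \<in> D \<Longrightarrow> is_split H V1 V2 \<Longrightarrow> Inr m \<notin> (\<Union>Q\<in>D. fst Q) \<Longrightarrow>
     split_dec G (insert (split_part H V1 V2 m) (insert (split_part H V2 V1 m) (D - {H})))"

definition split_decomposition :: "'a graph \<Rightarrow> ('a + nat) graph set \<Rightarrow> bool" where
  "split_decomposition G D \<longleftrightarrow> split_dec G D \<and> (\<forall>H\<in>D. prime_graph H)"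

text \<open>Adjacency of the split decomposition tree minus the node P.\<close>
definition tree_adj_minus :: "('a + nat) graph set \<Rightarrow> ('a + nat) graph
    \<Rightarrow> (('a + nat) graph \<times> ('a + nat) graph) set" where
  "tree_adj_minus D P = {(Q, R). Q \<in> D \<and> R \<in> D \<and> Q \<noteq> P \<and> R \<noteq> P \<and> Q \<noteq> R
      \<and> (\<exists>m. Inr m \<in> fst Q \<and> Inr m \<in> fst R)}"

definition tot :: "'a graph \<Rightarrow> ('a + nat) graph set \<Rightarrow> ('a + nat) graph \<Rightarrow> ('a + nat) \<Rightarrow> 'a set" where
  "tot G D P v = (case v of Inl x \<Rightarrow> {x}
     | Inr m \<Rightarrow> {x \<in> fst G. \<exists>Q\<in>D. Q \<noteq> P \<and> Inr m \<in> fst Q \<and>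
                   (\<exists>R\<in>D. Inl x \<in> fst R \<and> (Q, R) \<in> (tree_adj_minus D P)\<^sup>*)})"

definition act :: "'a graph \<Rightarrow> ('a + nat) graph set \<Rightarrow> ('a + nat) graph \<Rightarrow> ('a + nat) \<Rightarrow> 'a set" where
  "act G D P v = nbrs G (fst G - tot G D P v)"

definition act_set :: "'a graph \<Rightarrow> ('a + nat) graph set \<Rightarrow> ('a + nat) graph \<Rightarrow> ('a + nat) set \<Rightarrow> 'a set" where
  "act_set G D P S = (\<Union>v\<in>S. act G D P v)"

end

theory Submission
  imports Defs
begin

text \<open>Along a split decomposition every node Q represents G faithfully: a vertex w of Q
  stands for the set tot(w) of vertices of G, two distinct vertices of Q are adjacent whenever
  some edge of G joins their tot sets, and adjacent vertices of Q have completely joined active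
  sets in G. This invariant survives every split step, because the split condition makes all
  vertices of one side that see the other side see it identically. Consequently
  act(a:P) and act(N_P(a):P) are completely joined, so k vertices of the first set in X and
  k vertices of the second in Y form a matching of size k across the cut. As the sm-width is
  below k, sm and mm of the cut differ, so it is a split.\<close>

definition avoiding :: "('b \<times> 'b) set \<Rightarrow> 'b \<Rightarrow> ('b \<times> 'b) set" where
  "avoiding A h = A \<inter> {(p, q). p \<noteq> h \<and> q \<noteq> h}"

lemma rtrancl_avoiding_ne: "(s, b) \<in> (avoiding A h)\<^sup>* \<Longrightarrow> s \<noteq> h \<Longrightarrow> b \<noteq> h"
  by (induction rule: rtrancl_induct) (auto simp: avoiding_def)

lemma rtrancl_after_last_visit:
  assumes "(h, b) \<in> A\<^sup>*"
  shows "b = h \<or> (\<exists>s. s \<noteq> h \<and> (h, s) \<in> A \<and> (s, b) \<in> (avoiding A h)\<^sup>*)"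
  using assms
proof (induction rule: rtrancl_induct)
  case (step b c)
  show ?case
  proof (cases "c = h")
    case False
    from step.IH show ?thesis
    proof
      assume "b = h"
      with step.hyps(2) False show ?thesis by blast
    next
      assume "\<exists>s. s \<noteq> h \<and> (h, s) \<in> A \<and> (s, b) \<in> (avoiding A h)\<^sup>*"
      then obtain s where s: "s \<noteq> h" "(h, s) \<in> A" "(s, b) \<in> (avoiding A h)\<^sup>*" by blast
      have "b \<noteq> h" using rtrancl_avoiding_ne s(1,3) by metis
      then have "(b, c) \<in> avoiding A h" using False step.hyps(2) by (simp add: avoiding_def)
      with s show ?thesis by (meson rtrancl.rtrancl_into_rtrancl)
    qed
  qed simp
qed simp

lemma rtrancl_before_first_visit:
  assumes "(a, b) \<in> A\<^sup>*" "a \<noteq> h"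
  shows "(a, b) \<in> (avoiding A h)\<^sup>* \<or> (\<exists>s. (a, s) \<in> (avoiding A h)\<^sup>* \<and> (s, h) \<in> A)"
  using assms(1)
proof (induction rule: rtrancl_induct)
  case (step b c)
  from step.IH show ?case
  proof
    assume ab: "(a, b) \<in> (avoiding A h)\<^sup>*"
    have "b \<noteq> h" using rtrancl_avoiding_ne[OF ab assms(2)] .
    show ?thesis
    proof (cases "c = h")
      case True
      then show ?thesis using ab step.hyps(2) by blast
    next
      case False
      then have "(b, c) \<in> avoiding A h" using \<open>b \<noteq> h\<close> step.hyps(2) by (simp add: avoiding_def)
      then show ?thesis using ab by (meson rtrancl.rtrancl_into_rtrancl)
    qed
  qed blast
qed simp

text \<open>The component of the decomposition tree minus P at the marker m, whose original
  vertices form tot(Inr m:P) (lemma tot_Inr).\<close>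
definition marker_branch :: "('a + nat) graph set \<Rightarrow> ('a + nat) graph \<Rightarrow> nat \<Rightarrow> ('a + nat) graph set" where
  "marker_branch D P m =
     {R. \<exists>Q0\<in>D. Q0 \<noteq> P \<and> Inr m \<in> fst Q0 \<and> (Q0, R) \<in> (tree_adj_minus D P)\<^sup>*}"

lemma rtrancl_tree_adj_minus_in:
  assumes "(Q0, R) \<in> (tree_adj_minus D P)\<^sup>*" "Q0 \<in> D" "Q0 \<noteq> P"
  shows "R \<in> D \<and> R \<noteq> P"
  using assms by (induction rule: rtrancl_induct) (auto simp: tree_adj_minus_def)

lemma marker_branch_in: "R \<in> marker_branch D P m \<Longrightarrow> R \<in> D \<and> R \<noteq> P"
  unfolding marker_branch_def using rtrancl_tree_adj_minus_in by blast

lemma tot_Inl [simp]: "tot G D P (Inl x) = {x}"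
  by (simp add: tot_def)

lemma tot_Inr: "tot G D P (Inr m) = {x \<in> fst G. \<exists>R \<in> marker_branch D P m. Inl x \<in> fst R}"
proof (intro set_eqI iffI)
  fix x assume "x \<in> tot G D P (Inr m)"
  then obtain Q R where "x \<in> fst G" "Q \<in> D" "Q \<noteq> P" "Inr m \<in> fst Q" "Inl x \<in> fst R"
    "(Q, R) \<in> (tree_adj_minus D P)\<^sup>*" by (auto simp: tot_def)
  then show "x \<in> {x \<in> fst G. \<exists>R \<in> marker_branch D P m. Inl x \<in> fst R}"
    unfolding marker_branch_def by blast
next
  fix x assume "x \<in> {x \<in> fst G. \<exists>R \<in> marker_branch D P m. Inl x \<in> fst R}"
  then obtain R where "x \<in> fst G" "R \<in> marker_branch D P m" "Inl x \<in> fst R" by blast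
  moreover have "R \<in> D" using marker_branch_in calculation(2) by blast
  ultimately show "x \<in> tot G D P (Inr m)" unfolding tot_def marker_branch_def by auto
qed

lemma act_memD:
  assumes "graph G" "y \<in> act G D P w"
  shows "y \<in> tot G D P w \<and> (\<exists>z\<in>fst G. z \<notin> tot G D P w \<and> (z, y) \<in> snd G)"
proof -
  from assms(2) obtain z where z: "z \<in> fst G" "z \<notin> tot G D P w" "(z, y) \<in> snd G"
    "y \<notin> fst G - tot G D P w" unfolding act_def nbrs_def nbr_def by blast
  have "y \<in> fst G" using z(3) assms(1) unfolding graph_def by blast
  then show ?thesis using z by blast
qed

lemma act_memI:
  "y \<in> tot G D P w \<Longrightarrow> z \<in> fst G \<Longrightarrow> z \<notin> tot G D P w \<Longrightarrow> (z, y) \<in> snd G \<Longrightarrow> y \<in> act G D P w"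
  unfolding act_def nbrs_def nbr_def by auto

lemma act_cong: "tot G D P w = tot G D' P' w' \<Longrightarrow> act G D P w = act G D' P' w'"
  unfolding act_def by simp

definition uniform_crossing :: "'v graph \<Rightarrow> 'v set \<Rightarrow> 'v set \<Rightarrow> bool" where
  "uniform_crossing H V1 V2 \<longleftrightarrow> (\<forall>x\<in>V1. \<forall>y\<in>V1. nbr H x \<inter> V2 \<noteq> {} \<and> nbr H y \<inter> V2 \<noteq> {}
     \<longrightarrow> nbr H x \<inter> V2 = nbr H y \<inter> V2)"

lemma uniform_crossing_swap:
  assumes "sym (snd H)" and "uniform_crossing H V1 V2"
  shows "uniform_crossing H V2 V1"
  unfolding uniform_crossing_def
proof (intro ballI impI)
  have adj: "x \<in> nbr H y \<longleftrightarrow> y \<in> nbr H x" for x y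
    using assms(1) unfolding nbr_def sym_def by blast
  have sub: "nbr H x \<inter> V1 \<subseteq> nbr H y \<inter> V1" if "x \<in> V2" "y \<in> V2" "b \<in> nbr H y \<inter> V1" for x y b
  proof
    fix c assume c: "c \<in> nbr H x \<inter> V1"
    have "x \<in> nbr H c \<inter> V2" "y \<in> nbr H b \<inter> V2" using c that adj by auto
    then have "nbr H c \<inter> V2 = nbr H b \<inter> V2"
      using assms(2) c that(3) unfolding uniform_crossing_def by blast
    then show "c \<in> nbr H y \<inter> V1" using c \<open>y \<in> nbr H b \<inter> V2\<close> adj by blast
  qed
  fix x y assume "x \<in> V2" "y \<in> V2" "nbr H x \<inter> V1 \<noteq> {} \<and> nbr H y \<inter> V1 \<noteq> {}"
  then show "nbr H x \<inter> V1 = nbr H y \<inter> V1" using sub by (meson subset_antisym subsetI ex_in_conv)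
qed

text \<open>Disjointness of the branches at distinct markers is all of the tree structure of
  the decomposition that the argument needs.\<close>
locale faithful_node =
  fixes G :: "'a graph" and D :: "('a + nat) graph set" and Q :: "('a + nat) graph"
  assumes original_vertex: "Inl x \<in> fst Q \<Longrightarrow> x \<in> fst G"
    and edges_within: "snd Q \<subseteq> fst Q \<times> fst Q"
    and sym_edges: "sym (snd Q)"
    and marker_branches_disjoint: "Inr m1 \<in> fst Q \<Longrightarrow> Inr m2 \<in> fst Q \<Longrightarrow> m1 \<noteq> m2
       \<Longrightarrow> marker_branch D Q m1 \<inter> marker_branch D Q m2 = {}"
    and tot_cover: "x \<in> fst G \<Longrightarrow> \<exists>w\<in>fst Q. x \<in> tot G D Q w"
    and act_complete: "(w1, w2) \<in> snd Q \<Longrightarrow> x \<in> act G D Q w1 \<Longrightarrow> y \<in> act G D Q w2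
       \<Longrightarrow> (x, y) \<in> snd G"
    and tot_edge_reflected: "w1 \<in> fst Q \<Longrightarrow> w2 \<in> fst Q \<Longrightarrow> w1 \<noteq> w2
       \<Longrightarrow> x \<in> tot G D Q w1 \<Longrightarrow> y \<in> tot G D Q w2 \<Longrightarrow> (x, y) \<in> snd G \<Longrightarrow> (w1, w2) \<in> snd Q"

lemma (in faithful_node) sym_edge: "(w1, w2) \<in> snd Q \<Longrightarrow> (w2, w1) \<in> snd Q"
  using sym_edges unfolding sym_def by blast

locale split_step =
  fixes G :: "'a graph" and D :: "('a + nat) graph set" and H :: "('a + nat) graph"
    and V1 V2 :: "('a + nat) set" and m :: nat and H1 H2 :: "('a + nat) graph"
  assumes graph_G: "graph G"
    and faithful: "\<And>Q. Q \<in> D \<Longrightarrow> faithful_node G D Q"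
    and H_in: "H \<in> D"
    and parts_union: "V1 \<union> V2 = fst H" and parts_disjoint: "V1 \<inter> V2 = {}"
    and V1_nonempty: "V1 \<noteq> {}"
    and marker_fresh: "Inr m \<notin> (\<Union>Q\<in>D. fst Q)"
    and H1_def: "H1 = split_part H V1 V2 m" and H2_def: "H2 = split_part H V2 V1 m"
begin

abbreviation "D' \<equiv> insert H1 (insert H2 (D - {H}))"

sublocale H: faithful_node G D H
  using faithful H_in by blast

lemma sym_G: "(x, y) \<in> snd G \<Longrightarrow> (y, x) \<in> snd G"
  using graph_G unfolding graph_def sym_def by blast

lemma fst_H1: "fst H1 = insert (Inr m) V1"
  by (simp add: H1_def split_part_def)

lemma fst_H2: "fst H2 = insert (Inr m) V2"
  by (simp add: H2_def split_part_def)

lemma mem_fst_H: "x \<in> fst H \<longleftrightarrow> x \<in> V1 \<or> x \<in> V2"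
  using parts_union by auto

lemma marker_notin: "R \<in> D \<Longrightarrow> Inr m \<notin> fst R"
  using marker_fresh by blast

lemma marker_notin_V1: "Inr m \<notin> V1"
  using marker_notin[OF H_in] mem_fst_H by auto

lemma H1_notin_D: "H1 \<notin> D"
  by (metis marker_notin fst_H1 insertI1)

lemma H2_notin_D: "H2 \<notin> D"
  by (metis marker_notin fst_H2 insertI1)

lemma H1_neq_H2: "H1 \<noteq> H2"
proof
  assume "H1 = H2"
  then have "insert (Inr m) V1 = insert (Inr m) V2" using fst_H1 fst_H2 by metis
  moreover obtain v where "v \<in> V1" using V1_nonempty by blast
  ultimately have "v \<in> insert (Inr m) V2" by (metis insertI2)
  with \<open>v \<in> V1\<close> show False using marker_notin_V1 parts_disjoint by auto
qed

lemma H_neq_H1: "H \<noteq> H1" and H_neq_H2: "H \<noteq> H2"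
  using H_in H1_notin_D H2_notin_D by auto

text \<open>For an old node Q, paths in the new tree minus Q map to paths in the old tree minus Q
  by merging the halves H1 and H2 back into H, and conversely.\<close>
definition coarsen :: "('a + nat) graph \<Rightarrow> ('a + nat) graph" where
  "coarsen R = (if R = H1 \<or> R = H2 then H else R)"

definition refine :: "('a + nat) graph \<Rightarrow> ('a + nat) graph set" where
  "refine R = (if R = H then {H1, H2} else {R})"

lemma coarsen_in: "R \<in> D' \<Longrightarrow> coarsen R \<in> D"
  using H_in by (auto simp: coarsen_def)

lemma coarsen_fst: "R \<in> D' \<Longrightarrow> v \<in> fst R \<Longrightarrow> v \<noteq> Inr m \<Longrightarrow> v \<in> fst (coarsen R)"
  using fst_H1 fst_H2 mem_fst_H by (auto simp: coarsen_def)

lemma coarsen_adj: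
  assumes Q: "Q \<in> D" "Q \<noteq> H" and e: "(R1, R2) \<in> tree_adj_minus D' Q"
  shows "coarsen R1 = coarsen R2 \<or> (coarsen R1, coarsen R2) \<in> tree_adj_minus D Q"
proof -
  from e obtain m0 where R: "R1 \<in> D'" "R2 \<in> D'" "R1 \<noteq> Q" "R2 \<noteq> Q"
     "Inr m0 \<in> fst R1" "Inr m0 \<in> fst R2" by (auto simp: tree_adj_minus_def)
  show ?thesis
  proof (cases "m0 = m")
    case True
    then have "R1 = H1 \<or> R1 = H2" "R2 = H1 \<or> R2 = H2"
      using R marker_notin[of R1] marker_notin[of R2] by auto
    then show ?thesis by (auto simp: coarsen_def)
  next
    case False
    have "coarsen R1 \<noteq> Q" "coarsen R2 \<noteq> Q" using R Q by (auto simp: coarsen_def)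
    moreover have "Inr m0 \<in> fst (coarsen R1)" "Inr m0 \<in> fst (coarsen R2)"
      using coarsen_fst R False by auto
    ultimately show ?thesis using coarsen_in R(1,2) by (auto simp: tree_adj_minus_def)
  qed
qed

lemma rtrancl_coarsen:
  assumes Q: "Q \<in> D" "Q \<noteq> H" and p: "(R1, R2) \<in> (tree_adj_minus D' Q)\<^sup>*"
  shows "(coarsen R1, coarsen R2) \<in> (tree_adj_minus D Q)\<^sup>*"
  using p
proof (induction rule: rtrancl_induct)
  case (step b c)
  from coarsen_adj[OF Q step.hyps(2)] show ?case
  proof
    assume "coarsen b = coarsen c"
    then show ?case using step.IH by simp
  next
    assume "(coarsen b, coarsen c) \<in> tree_adj_minus D Q"
    with step.IH show ?case by (rule rtrancl.rtrancl_into_rtrancl)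
  qed
qed simp

lemma refine_in: "Q \<in> D \<Longrightarrow> R \<in> D \<Longrightarrow> R \<noteq> Q \<Longrightarrow> R' \<in> refine R \<Longrightarrow> R' \<in> D' \<and> R' \<noteq> Q"
  using H1_notin_D H2_notin_D H_neq_H1 H_neq_H2 by (auto simp: refine_def split: if_splits)

lemma refine_mem: "R \<in> D \<Longrightarrow> v \<in> fst R \<Longrightarrow> \<exists>R'\<in>refine R. v \<in> fst R'"
  using mem_fst_H by (auto simp: refine_def fst_H1 fst_H2)

lemma refine_disjoint: "R1 \<in> D \<Longrightarrow> R2 \<in> D \<Longrightarrow> R1 \<noteq> R2 \<Longrightarrow> refine R1 \<inter> refine R2 = {}"
  unfolding refine_def using H1_notin_D H2_notin_D by auto

lemma refine_connected:
  assumes "Q \<in> D" "Q \<noteq> H" "R \<in> D" "R \<noteq> Q" "R' \<in> refine R" "R'' \<in> refine R"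
  shows "(R', R'') \<in> (tree_adj_minus D' Q)\<^sup>*"
proof (cases "R = H")
  case False
  then show ?thesis using assms by (simp add: refine_def)
next
  case True
  have "Q \<noteq> H1" "Q \<noteq> H2" using assms H1_notin_D H2_notin_D by auto
  then have "(H1, H2) \<in> tree_adj_minus D' Q" "(H2, H1) \<in> tree_adj_minus D' Q"
    using H1_neq_H2 fst_H1 fst_H2 by (auto simp: tree_adj_minus_def)
  then show ?thesis using True assms(5,6) by (auto simp: refine_def)
qed

lemma refine_adj:
  assumes Q: "Q \<in> D" "Q \<noteq> H" and e: "(R1, R2) \<in> tree_adj_minus D Q"
  shows "\<exists>R1'\<in>refine R1. \<exists>R2'\<in>refine R2. (R1', R2') \<in> tree_adj_minus D' Q"
proof -
  from e obtain m0 where R: "R1 \<in> D" "R2 \<in> D" "R1 \<noteq> Q" "R2 \<noteq> Q" "R1 \<noteq> R2"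
     "Inr m0 \<in> fst R1" "Inr m0 \<in> fst R2" by (auto simp: tree_adj_minus_def)
  obtain R1' where R1': "R1' \<in> refine R1" "Inr m0 \<in> fst R1'" using refine_mem R by blast
  obtain R2' where R2': "R2' \<in> refine R2" "Inr m0 \<in> fst R2'" using refine_mem R by blast
  have "R1' \<noteq> R2'"
    using refine_disjoint R(1,2,5) R1'(1) R2'(1) by blast
  moreover have "R1' \<in> D' \<and> R1' \<noteq> Q" "R2' \<in> D' \<and> R2' \<noteq> Q"
    using refine_in Q R R1' R2' by blast+
  ultimately have "(R1', R2') \<in> tree_adj_minus D' Q"
    using R1'(2) R2'(2) unfolding tree_adj_minus_def by blast
  then show ?thesis using R1'(1) R2'(1) by blast
qed

lemma rtrancl_refine:
  assumes Q: "Q \<in> D" "Q \<noteq> H" and p: "(R1, R2) \<in> (tree_adj_minus D Q)\<^sup>*"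
    and R1: "R1 \<in> D" "R1 \<noteq> Q"
  shows "\<forall>R1'\<in>refine R1. \<forall>R2'\<in>refine R2. (R1', R2') \<in> (tree_adj_minus D' Q)\<^sup>*"
  using p
proof (induction rule: rtrancl_induct)
  case base
  then show ?case using refine_connected Q R1 by blast
next
  case (step b c)
  have c: "c \<in> D" "c \<noteq> Q" using step.hyps(2) by (auto simp: tree_adj_minus_def)
  show ?case
  proof (intro ballI)
    fix R1' c' assume a: "R1' \<in> refine R1" "c' \<in> refine c"
    obtain b'' c'' where bc: "b'' \<in> refine b" "c'' \<in> refine c" "(b'', c'') \<in> tree_adj_minus D' Q"
      using refine_adj[OF Q step.hyps(2)] by blast
    have "(R1', b'') \<in> (tree_adj_minus D' Q)\<^sup>*" using step.IH a bc by blast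
    moreover have "(c'', c') \<in> (tree_adj_minus D' Q)\<^sup>*" using refine_connected[OF Q c bc(2) a(2)] .
    ultimately show "(R1', c') \<in> (tree_adj_minus D' Q)\<^sup>*" using bc(3)
      by (meson rtrancl.rtrancl_into_rtrancl rtrancl_trans)
  qed
qed

lemma marker_branch_coarsen:
  assumes Q: "Q \<in> D" "Q \<noteq> H" and "m' \<noteq> m" and R: "R' \<in> marker_branch D' Q m'"
  shows "coarsen R' \<in> marker_branch D Q m'"
proof -
  from R obtain Q0 where Q0: "Q0 \<in> D'" "Q0 \<noteq> Q" "Inr m' \<in> fst Q0"
      "(Q0, R') \<in> (tree_adj_minus D' Q)\<^sup>*"
    unfolding marker_branch_def by blast
  have "coarsen Q0 \<in> D" "Inr m' \<in> fst (coarsen Q0)" "coarsen Q0 \<noteq> Q"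
    using coarsen_in[OF Q0(1)] coarsen_fst[OF Q0(1,3)] \<open>m' \<noteq> m\<close> Q Q0(2)
    by (auto simp: coarsen_def)
  with rtrancl_coarsen[OF Q Q0(4)] show ?thesis by (auto simp: marker_branch_def)
qed

lemma marker_branch_refine:
  assumes Q: "Q \<in> D" "Q \<noteq> H" and R: "R \<in> marker_branch D Q m'" and R': "R' \<in> refine R"
  shows "R' \<in> marker_branch D' Q m'"
proof -
  from R obtain Q0 where Q0: "Q0 \<in> D" "Q0 \<noteq> Q" "Inr m' \<in> fst Q0"
      "(Q0, R) \<in> (tree_adj_minus D Q)\<^sup>*"
    unfolding marker_branch_def by blast
  obtain Q0' where Q0': "Q0' \<in> refine Q0" "Inr m' \<in> fst Q0'" using refine_mem Q0 by blast
  have "Q0' \<in> D'" "Q0' \<noteq> Q" using refine_in Q Q0 Q0' by blast+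
  moreover have "(Q0', R') \<in> (tree_adj_minus D' Q)\<^sup>*"
    using rtrancl_refine[OF Q Q0(4) Q0(1,2)] Q0' R' by blast
  ultimately show ?thesis using Q0' by (auto simp: marker_branch_def)
qed

lemma tot_other:
  assumes Q: "Q \<in> D" "Q \<noteq> H" and "w \<noteq> Inr m"
  shows "tot G D' Q w = tot G D Q w"
proof (cases w)
  case (Inr m')
  with \<open>w \<noteq> Inr m\<close> have "m' \<noteq> m" by simp
  show ?thesis unfolding Inr tot_Inr
  proof (intro set_eqI iffI)
    fix x assume "x \<in> {x \<in> fst G. \<exists>R\<in>marker_branch D' Q m'. Inl x \<in> fst R}"
    then obtain R where "x \<in> fst G" "R \<in> marker_branch D' Q m'" "Inl x \<in> fst R" by blast
    moreover have "R \<in> D'" using marker_branch_in calculation(2) by blast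
    ultimately show "x \<in> {x \<in> fst G. \<exists>R\<in>marker_branch D Q m'. Inl x \<in> fst R}"
      using marker_branch_coarsen[OF Q \<open>m' \<noteq> m\<close>] coarsen_fst by blast
  next
    fix x assume "x \<in> {x \<in> fst G. \<exists>R\<in>marker_branch D Q m'. Inl x \<in> fst R}"
    then obtain R where "x \<in> fst G" "R \<in> marker_branch D Q m'" "Inl x \<in> fst R" by blast
    moreover have "R \<in> D" using marker_branch_in calculation(2) by blast
    moreover obtain R' where "R' \<in> refine R" "Inl x \<in> fst R'" using refine_mem calculation by blast
    ultimately show "x \<in> {x \<in> fst G. \<exists>R\<in>marker_branch D' Q m'. Inl x \<in> fst R}"
      using marker_branch_refine[OF Q] by blast
  qed
qed simp

lemma faithful_other:
  assumes Q: "Q \<in> D" "Q \<noteq> H"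
  shows "faithful_node G D' Q"
proof -
  interpret Q: faithful_node G D Q using faithful Q(1) .
  have tot_eq: "tot G D' Q w = tot G D Q w" if "w \<in> fst Q" for w
    using tot_other Q marker_notin that by metis
  have act_eq: "act G D' Q w = act G D Q w" if "w \<in> fst Q" for w
    using tot_eq act_cong that by metis
  show ?thesis
  proof unfold_locales
    show "marker_branch D' Q m1 \<inter> marker_branch D' Q m2 = {}"
      if "Inr m1 \<in> fst Q" "Inr m2 \<in> fst Q" "m1 \<noteq> m2" for m1 m2
    proof -
      have "m1 \<noteq> m" "m2 \<noteq> m" using that marker_notin[OF Q(1)] by auto
      then show ?thesis
        using marker_branch_coarsen[OF Q] Q.marker_branches_disjoint[OF that] by blast
    qed
    show "(x, y) \<in> snd G" if "(w1, w2) \<in> snd Q" "x \<in> act G D' Q w1" "y \<in> act G D' Q w2"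
      for w1 w2 x y
    proof -
      have "w1 \<in> fst Q" "w2 \<in> fst Q" using that(1) Q.edges_within by auto
      then show ?thesis using that act_eq Q.act_complete by simp
    qed
    show "\<exists>w\<in>fst Q. x \<in> tot G D' Q w" if "x \<in> fst G" for x
      using Q.tot_cover[OF that] tot_eq by auto
    show "(w1, w2) \<in> snd Q" if "w1 \<in> fst Q" "w2 \<in> fst Q" "w1 \<noteq> w2"
      "x \<in> tot G D' Q w1" "y \<in> tot G D' Q w2" "(x, y) \<in> snd G" for w1 w2 x y
      using Q.tot_edge_reflected that tot_eq by simp
  qed (fact Q.original_vertex Q.edges_within Q.sym_edges)+
qed

lemma tree_adj_minus_H_sub: "tree_adj_minus D H \<subseteq> tree_adj_minus D' H1"
  using H1_notin_D unfolding tree_adj_minus_def by auto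

lemma avoiding_H2_sub: "avoiding (tree_adj_minus D' H1) H2 \<subseteq> tree_adj_minus D H"
  unfolding avoiding_def tree_adj_minus_def by auto

lemma rtrancl_tree_adj_minus_H:
  "(R1, R2) \<in> (tree_adj_minus D H)\<^sup>* \<Longrightarrow> (R1, R2) \<in> (tree_adj_minus D' H1)\<^sup>*"
  using rtrancl_mono[OF tree_adj_minus_H_sub] by blast

lemma rtrancl_avoiding_H2:
  "(R1, R2) \<in> (avoiding (tree_adj_minus D' H1) H2)\<^sup>* \<Longrightarrow> (R1, R2) \<in> (tree_adj_minus D H)\<^sup>*"
  using rtrancl_mono[OF avoiding_H2_sub] by blast

lemma tree_adj_minus_H2:
  assumes "(S, H2) \<in> tree_adj_minus D' H1 \<or> (H2, S) \<in> tree_adj_minus D' H1"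
  shows "\<exists>m0. S \<in> D \<and> S \<noteq> H \<and> Inr m0 \<in> V2 \<and> Inr m0 \<in> fst S"
proof -
  from assms obtain m0 where S: "S \<in> D'" "S \<noteq> H1" "S \<noteq> H2" "Inr m0 \<in> fst S" "Inr m0 \<in> fst H2"
    unfolding tree_adj_minus_def by auto
  have SD: "S \<in> D" "S \<noteq> H" using S(1-3) by auto
  have "m0 \<noteq> m" using marker_notin[OF SD(1)] S(4) by auto
  then have "Inr m0 \<in> V2" using S(5) fst_H2 by auto
  then show ?thesis using SD S(4) by blast
qed

text \<open>A path from the branch at m' that reached H2 would enter it through a marker of V2,
  contradicting the disjointness of the branches of H.\<close>
lemma marker_branch_H1_V1:
  assumes m': "Inr m' \<in> V1"
  shows "marker_branch D' H1 m' = marker_branch D H m'"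
proof (intro set_eqI iffI)
  fix R assume "R \<in> marker_branch D H m'"
  then obtain Q0 where Q0: "Q0 \<in> D" "Q0 \<noteq> H" "Inr m' \<in> fst Q0" "(Q0, R) \<in> (tree_adj_minus D H)\<^sup>*"
    unfolding marker_branch_def by blast
  have "Q0 \<in> D'" "Q0 \<noteq> H1" using Q0 H1_notin_D by auto
  then show "R \<in> marker_branch D' H1 m'"
    using Q0(3) rtrancl_tree_adj_minus_H[OF Q0(4)] unfolding marker_branch_def by blast
next
  fix R assume "R \<in> marker_branch D' H1 m'"
  then obtain Q0 where Q0: "Q0 \<in> D'" "Q0 \<noteq> H1" "Inr m' \<in> fst Q0"
    and p: "(Q0, R) \<in> (tree_adj_minus D' H1)\<^sup>*"
    unfolding marker_branch_def by blast
  have "Q0 \<noteq> H2" using Q0(3) m' marker_notin_V1 parts_disjoint fst_H2 by auto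
  then have Q0D: "Q0 \<in> D" "Q0 \<noteq> H" using Q0 by auto
  have m'H: "Inr m' \<in> fst H" using m' mem_fst_H by auto
  from rtrancl_before_first_visit[OF p \<open>Q0 \<noteq> H2\<close>] show "R \<in> marker_branch D H m'"
  proof
    assume "(Q0, R) \<in> (avoiding (tree_adj_minus D' H1) H2)\<^sup>*"
    then show ?thesis using rtrancl_avoiding_H2 Q0D Q0(3) unfolding marker_branch_def by blast
  next
    assume "\<exists>s. (Q0, s) \<in> (avoiding (tree_adj_minus D' H1) H2)\<^sup>* \<and> (s, H2) \<in> tree_adj_minus D' H1"
    then obtain s where s1: "(Q0, s) \<in> (avoiding (tree_adj_minus D' H1) H2)\<^sup>*"
      and s2: "(s, H2) \<in> tree_adj_minus D' H1" by blast
    obtain m0 where m0: "s \<in> D" "s \<noteq> H" "Inr m0 \<in> V2" "Inr m0 \<in> fst s"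
      using tree_adj_minus_H2 s2 by blast
    have "s \<in> marker_branch D H m0" using m0 unfolding marker_branch_def by blast
    moreover have "s \<in> marker_branch D H m'"
      using rtrancl_avoiding_H2[OF s1] Q0D Q0(3) unfolding marker_branch_def by blast
    moreover have "m' \<noteq> m0" using m0(3) m' parts_disjoint by auto
    moreover have "Inr m0 \<in> fst H" using m0(3) mem_fst_H by auto
    ultimately show ?thesis using H.marker_branches_disjoint[OF m'H] by blast
  qed
qed

lemma marker_branch_H1_marker:
  "marker_branch D' H1 m = insert H2 (\<Union>m0 \<in> {m0. Inr m0 \<in> V2}. marker_branch D H m0)"
proof (intro set_eqI iffI)
  fix R assume "R \<in> marker_branch D' H1 m"
  then obtain Q0 where Q0: "Q0 \<in> D'" "Q0 \<noteq> H1" "Inr m \<in> fst Q0"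
    and p: "(Q0, R) \<in> (tree_adj_minus D' H1)\<^sup>*"
    unfolding marker_branch_def by blast
  have "Q0 = H2" using Q0 marker_notin[of Q0] by auto
  with p have p: "(H2, R) \<in> (tree_adj_minus D' H1)\<^sup>*" by simp
  from rtrancl_after_last_visit[OF p]
  show "R \<in> insert H2 (\<Union>m0 \<in> {m0. Inr m0 \<in> V2}. marker_branch D H m0)"
  proof
    assume "\<exists>s. s \<noteq> H2 \<and> (H2, s) \<in> tree_adj_minus D' H1
      \<and> (s, R) \<in> (avoiding (tree_adj_minus D' H1) H2)\<^sup>*"
    then obtain s where s1: "(H2, s) \<in> tree_adj_minus D' H1"
      and s2: "(s, R) \<in> (avoiding (tree_adj_minus D' H1) H2)\<^sup>*" by blast
    obtain m0 where m0: "s \<in> D" "s \<noteq> H" "Inr m0 \<in> V2" "Inr m0 \<in> fst s"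
      using tree_adj_minus_H2 s1 by blast
    have "R \<in> marker_branch D H m0"
      using rtrancl_avoiding_H2[OF s2] m0 unfolding marker_branch_def by blast
    then show ?thesis using m0(3) by blast
  qed simp
next
  fix R assume R: "R \<in> insert H2 (\<Union>m0 \<in> {m0. Inr m0 \<in> V2}. marker_branch D H m0)"
  have H2: "H2 \<in> D'" "H2 \<noteq> H1" "Inr m \<in> fst H2" using H1_neq_H2 fst_H2 by auto
  show "R \<in> marker_branch D' H1 m"
  proof (cases "R = H2")
    case True
    then show ?thesis using H2 unfolding marker_branch_def by blast
  next
    case False
    then obtain m0 where m0: "Inr m0 \<in> V2" "R \<in> marker_branch D H m0" using R by blast
    then obtain Q0 where Q0: "Q0 \<in> D" "Q0 \<noteq> H" "Inr m0 \<in> fst Q0"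
        "(Q0, R) \<in> (tree_adj_minus D H)\<^sup>*"
      unfolding marker_branch_def by blast
    have "(H2, Q0) \<in> tree_adj_minus D' H1"
      using Q0 H2 H1_notin_D H2_notin_D fst_H2 m0(1) unfolding tree_adj_minus_def by auto
    then have "(H2, R) \<in> (tree_adj_minus D' H1)\<^sup>*"
      using rtrancl_tree_adj_minus_H[OF Q0(4)] by (meson converse_rtrancl_into_rtrancl)
    then show ?thesis using H2 unfolding marker_branch_def by blast
  qed
qed

lemma tot_H1_V1: "w \<in> V1 \<Longrightarrow> tot G D' H1 w = tot G D H w"
  by (cases w) (simp_all add: tot_Inr marker_branch_H1_V1)

lemma act_H1_V1: "w \<in> V1 \<Longrightarrow> act G D' H1 w = act G D H w"
  using tot_H1_V1 act_cong by metis

lemma tot_H1_marker: "tot G D' H1 (Inr m) = (\<Union>w\<in>V2. tot G D H w)"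
proof (intro set_eqI iffI)
  fix x assume "x \<in> tot G D' H1 (Inr m)"
  then obtain R where R: "x \<in> fst G" "R \<in> marker_branch D' H1 m" "Inl x \<in> fst R"
    unfolding tot_Inr by blast
  show "x \<in> (\<Union>w\<in>V2. tot G D H w)"
  proof (cases "R = H2")
    case True
    then have "Inl x \<in> V2" using R(3) fst_H2 by auto
    then show ?thesis by force
  next
    case False
    then obtain m0 where m0: "Inr m0 \<in> V2" "R \<in> marker_branch D H m0"
      using R(2) unfolding marker_branch_H1_marker by blast
    then have "x \<in> tot G D H (Inr m0)" unfolding tot_Inr using R(1,3) by blast
    then show ?thesis using m0(1) by blast
  qed
next
  fix x assume "x \<in> (\<Union>w\<in>V2. tot G D H w)"
  then obtain w where w: "w \<in> V2" "x \<in> tot G D H w" by blast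
  show "x \<in> tot G D' H1 (Inr m)"
  proof (cases w)
    case (Inl y)
    then have xV: "Inl x \<in> V2" using w by simp
    then have "x \<in> fst G" using H.original_vertex mem_fst_H by blast
    moreover have "H2 \<in> marker_branch D' H1 m" unfolding marker_branch_H1_marker by simp
    ultimately show ?thesis unfolding tot_Inr using xV fst_H2 by auto
  next
    case (Inr m0)
    then have "x \<in> tot G D H (Inr m0)" using w(2) by simp
    then obtain R where R: "x \<in> fst G" "R \<in> marker_branch D H m0" "Inl x \<in> fst R"
      unfolding tot_Inr by blast
    have "R \<in> marker_branch D' H1 m" unfolding marker_branch_H1_marker using R(2) w(1) Inr by blast
    then show ?thesis unfolding tot_Inr using R by blast
  qed
qed

lemma nbrs_V2_iff: "x \<in> nbrs H V2 \<longleftrightarrow> x \<in> V1 \<and> (\<exists>v\<in>V2. (x, v) \<in> snd H)"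
proof
  assume "x \<in> nbrs H V2"
  then obtain v where v: "v \<in> V2" "(v, x) \<in> snd H" "x \<notin> V2" unfolding nbrs_def nbr_def by auto
  have "x \<in> V1" using H.edges_within v(2,3) mem_fst_H by auto
  then show "x \<in> V1 \<and> (\<exists>v\<in>V2. (x, v) \<in> snd H)" using v(1,2) H.sym_edge by blast
next
  assume "x \<in> V1 \<and> (\<exists>v\<in>V2. (x, v) \<in> snd H)"
  then show "x \<in> nbrs H V2" unfolding nbrs_def nbr_def using parts_disjoint H.sym_edge by blast
qed

lemma edge_H1_iff: "(a, b) \<in> snd H1 \<longleftrightarrow> ((a, b) \<in> snd H \<and> a \<in> V1 \<and> b \<in> V1)
   \<or> (a = Inr m \<and> b \<in> nbrs H V2) \<or> (b = Inr m \<and> a \<in> nbrs H V2)"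
  by (auto simp: H1_def split_part_def)

text \<open>The only place where the split condition on (V1, V2) is used: every vertex of V1
  adjacent to V2 sees all of V2 that is seen from V1.\<close>
lemma act_complete_marker:
  assumes sc: "uniform_crossing H V1 V2"
    and w1: "w1 \<in> nbrs H V2" and x: "x \<in> act G D H w1" and y: "y \<in> act G D' H1 (Inr m)"
  shows "(x, y) \<in> snd G"
proof -
  obtain v where w1V: "w1 \<in> V1" "v \<in> V2" "(w1, v) \<in> snd H" using w1 nbrs_V2_iff by blast
  define U where "U = (\<Union>w\<in>V2. tot G D H w)"
  from act_memD[OF graph_G y] obtain z where z: "y \<in> U" "z \<in> fst G" "z \<notin> U" "(z, y) \<in> snd G"
    unfolding tot_H1_marker U_def by blast
  obtain w2 where w2: "w2 \<in> V2" "y \<in> tot G D H w2" using z(1) unfolding U_def by blast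
  obtain w0 where w0: "w0 \<in> fst H" "z \<in> tot G D H w0" using H.tot_cover z(2) by blast
  have w0V: "w0 \<in> V1" using w0 z(3) mem_fst_H unfolding U_def by blast
  have "w2 \<noteq> w0" using w0V w2(1) parts_disjoint by auto
  then have "(w2, w0) \<in> snd H"
    using H.tot_edge_reflected[of w2 w0 y z] w2 w0 mem_fst_H sym_G[OF z(4)] by auto
  then have "w2 \<in> nbr H w0 \<inter> V2" using H.sym_edge w2(1) unfolding nbr_def by auto
  moreover have "v \<in> nbr H w1 \<inter> V2" using w1V unfolding nbr_def by auto
  ultimately have "w2 \<in> nbr H w1 \<inter> V2"
    using sc w0V w1V(1) unfolding uniform_crossing_def by blast
  then have e12: "(w1, w2) \<in> snd H" unfolding nbr_def by auto
  have "z \<notin> tot G D H w2" using z(3) w2(1) unfolding U_def by blast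
  then have "y \<in> act G D H w2" using act_memI[OF w2(2) z(2) _ z(4)] by blast
  then show ?thesis using H.act_complete[OF e12 x] by blast
qed

lemma faithful_H1:
  assumes sc: "uniform_crossing H V1 V2"
  shows "faithful_node G D' H1"
proof unfold_locales
  show "x \<in> fst G" if "Inl x \<in> fst H1" for x
    using that fst_H1 H.original_vertex mem_fst_H by auto
  show "snd H1 \<subseteq> fst H1 \<times> fst H1"
    unfolding fst_H1 using edge_H1_iff nbrs_V2_iff by auto
  show "sym (snd H1)"
    unfolding sym_def edge_H1_iff using H.sym_edge by blast
  show "marker_branch D' H1 m1 \<inter> marker_branch D' H1 m2 = {}"
    if "Inr m1 \<in> fst H1" "Inr m2 \<in> fst H1" "m1 \<noteq> m2" for m1 m2
  proof -
    have disj: "marker_branch D' H1 a \<inter> marker_branch D' H1 b = {}"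
      if a: "Inr a \<in> V1" and b: "Inr b \<in> fst H1" "a \<noteq> b" for a b
    proof (cases "b = m")
      case True
      have "H2 \<notin> marker_branch D H a" using marker_branch_in H2_notin_D by blast
      moreover have "marker_branch D H a \<inter> marker_branch D H m0 = {}" if "Inr m0 \<in> V2" for m0
        using H.marker_branches_disjoint[of a m0] that a mem_fst_H parts_disjoint by auto
      ultimately show ?thesis
        unfolding True marker_branch_H1_marker marker_branch_H1_V1[OF a] by blast
    next
      case False
      then have "Inr b \<in> V1" using b(1) fst_H1 by auto
      then show ?thesis
        using marker_branch_H1_V1 a H.marker_branches_disjoint[of a b] mem_fst_H b(2) by auto
    qed
    show ?thesis
    proof (cases "m1 = m")
      case True
      then have "Inr m2 \<in> V1" using that fst_H1 by auto
      then show ?thesis using disj[of m2 m1] that by blast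
    next
      case False
      then have "Inr m1 \<in> V1" using that fst_H1 by auto
      then show ?thesis using disj[of m1 m2] that by blast
    qed
  qed
  show "\<exists>w\<in>fst H1. x \<in> tot G D' H1 w" if x: "x \<in> fst G" for x
  proof -
    obtain w where w: "w \<in> fst H" "x \<in> tot G D H w" using H.tot_cover x by blast
    show ?thesis
    proof (cases "w \<in> V1")
      case True
      then show ?thesis using w tot_H1_V1 fst_H1 by auto
    next
      case False
      then have "w \<in> V2" using w mem_fst_H by auto
      then show ?thesis using w tot_H1_marker fst_H1 by auto
    qed
  qed
  show "(x, y) \<in> snd G"
    if e: "(w1, w2) \<in> snd H1" and x: "x \<in> act G D' H1 w1" and y: "y \<in> act G D' H1 w2" for w1 w2 x y
  proof -
    consider "(w1, w2) \<in> snd H" "w1 \<in> V1" "w2 \<in> V1" | "w1 = Inr m" "w2 \<in> nbrs H V2"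
      | "w2 = Inr m" "w1 \<in> nbrs H V2"
      using e edge_H1_iff by blast
    then show ?thesis
    proof cases
      case 1
      then show ?thesis using H.act_complete x y act_H1_V1 by metis
    next
      case 2
      then have "w2 \<in> V1" using nbrs_V2_iff by blast
      then have "(y, x) \<in> snd G" using act_complete_marker[OF sc 2(2)] x y act_H1_V1 2(1) by metis
      then show ?thesis using sym_G by blast
    next
      case 3
      then have "w1 \<in> V1" using nbrs_V2_iff by blast
      then show ?thesis using act_complete_marker[OF sc 3(2)] x y act_H1_V1 3(1) by metis
    qed
  qed
  show "(w1, w2) \<in> snd H1"
    if w: "w1 \<in> fst H1" "w2 \<in> fst H1" "w1 \<noteq> w2" and x: "x \<in> tot G D' H1 w1"
      and y: "y \<in> tot G D' H1 w2" and e: "(x, y) \<in> snd G" for w1 w2 x y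
  proof -
    have fst_H1_cases: "w = Inr m \<or> w \<in> V1" if "w \<in> fst H1" for w using that fst_H1 by auto
    consider "w1 = Inr m" "w2 \<in> V1" | "w2 = Inr m" "w1 \<in> V1" | "w1 \<in> V1" "w2 \<in> V1"
      using fst_H1_cases[OF w(1)] fst_H1_cases[OF w(2)] w(3) by blast
    then show ?thesis
    proof cases
      case 1
      then obtain w1' where "w1' \<in> V2" "x \<in> tot G D H w1'" using x tot_H1_marker by auto
      moreover have "w1' \<noteq> w2" using calculation 1(2) parts_disjoint by auto
      ultimately have "(w1', w2) \<in> snd H"
        using H.tot_edge_reflected[of w1' w2 x y] y tot_H1_V1[OF 1(2)] e mem_fst_H 1(2) by auto
      then have "w2 \<in> nbrs H V2" using nbrs_V2_iff 1(2) H.sym_edge \<open>w1' \<in> V2\<close> by blast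
      then show ?thesis using 1(1) edge_H1_iff by blast
    next
      case 2
      then obtain w2' where "w2' \<in> V2" "y \<in> tot G D H w2'" using y tot_H1_marker by auto
      moreover have "w1 \<noteq> w2'" using calculation 2(2) parts_disjoint by auto
      ultimately have "(w1, w2') \<in> snd H"
        using H.tot_edge_reflected[of w1 w2' x y] x tot_H1_V1[OF 2(2)] e mem_fst_H 2(2) by auto
      then have "w1 \<in> nbrs H V2" using nbrs_V2_iff 2(2) \<open>w2' \<in> V2\<close> by blast
      then show ?thesis using 2(1) edge_H1_iff by blast
    next
      case 3
      then have "(w1, w2) \<in> snd H"
        using H.tot_edge_reflected[of w1 w2 x y] x y tot_H1_V1[OF 3(1)] tot_H1_V1[OF 3(2)] e
          mem_fst_H w(3) by auto
      then show ?thesis using edge_H1_iff 3 by blast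
    qed
  qed
qed

end

lemma faithful_split_step:
  assumes graph_G: "graph G" and faithful: "\<And>Q. Q \<in> D \<Longrightarrow> faithful_node G D Q" and H: "H \<in> D"
    and split: "is_split H V1 V2" and fresh: "Inr m \<notin> (\<Union>Q\<in>D. fst Q)"
    and Q: "Q \<in> insert (split_part H V1 V2 m) (insert (split_part H V2 V1 m) (D - {H}))"
  shows "faithful_node G (insert (split_part H V1 V2 m) (insert (split_part H V2 V1 m) (D - {H}))) Q"
proof -
  have parts: "V1 \<union> V2 = fst H" "V2 \<union> V1 = fst H" "V1 \<inter> V2 = {}" "V2 \<inter> V1 = {}"
    and "card V1 \<ge> 2" "card V2 \<ge> 2" and crossing: "uniform_crossing H V1 V2"
    using split unfolding is_split_def uniform_crossing_def by auto
  then have "V1 \<noteq> {}" "V2 \<noteq> {}" by auto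
  interpret A: split_step G D H V1 V2 m "split_part H V1 V2 m" "split_part H V2 V1 m"
    by (rule split_step.intro[OF graph_G faithful H]) (use parts \<open>V1 \<noteq> {}\<close> fresh in auto)
  interpret B: split_step G D H V2 V1 m "split_part H V2 V1 m" "split_part H V1 V2 m"
    by (rule split_step.intro[OF graph_G faithful H]) (use parts \<open>V2 \<noteq> {}\<close> fresh in auto)
  have "uniform_crossing H V2 V1"
    using uniform_crossing_swap[OF A.H.sym_edges crossing] .
  then have "faithful_node G (insert (split_part H V1 V2 m) (insert (split_part H V2 V1 m) (D - {H})))
      (split_part H V2 V1 m)"
    using B.faithful_H1 by (simp add: insert_commute)
  moreover note A.faithful_H1[OF crossing]
  moreover have "Q \<in> D - {H} \<Longrightarrow> faithful_node G A.D' Q" using A.faithful_other by simp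
  ultimately show ?thesis using Q by fast
qed

lemma faithful_lift:
  assumes "graph G"
  shows "faithful_node G {lift G} (lift G)"
proof -
  have no_branch: "marker_branch {lift G} (lift G) m = {}" for m
    unfolding marker_branch_def by auto
  have fst_lift: "fst (lift G) = Inl ` fst G" and snd_lift: "snd (lift G) = map_prod Inl Inl ` snd G"
    by (simp_all add: lift_def)
  have G: "snd G \<subseteq> fst G \<times> fst G" "sym (snd G)" using assms unfolding graph_def by auto
  have act_Inl: "act G {lift G} (lift G) (Inl x) \<subseteq> {x}" for x
    using act_memD[OF assms] by fastforce
  show ?thesis
  proof unfold_locales
    show "snd (lift G) \<subseteq> fst (lift G) \<times> fst (lift G)" using G(1) unfolding fst_lift snd_lift by auto
    show "sym (snd (lift G))" using G(2) unfolding snd_lift sym_def by auto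
    show "\<exists>w\<in>fst (lift G). x \<in> tot G {lift G} (lift G) w" if "x \<in> fst G" for x
      using that unfolding fst_lift by (intro bexI[of _ "Inl x"]) auto
    show "(x, y) \<in> snd G" if e: "(w1, w2) \<in> snd (lift G)" and xy: "x \<in> act G {lift G} (lift G) w1"
      "y \<in> act G {lift G} (lift G) w2" for w1 w2 x y
    proof -
      obtain a b where "w1 = Inl a" "w2 = Inl b" "(a, b) \<in> snd G" using e unfolding snd_lift by auto
      then show ?thesis using xy act_Inl by blast
    qed
    show "(w1, w2) \<in> snd (lift G)" if "w1 \<in> fst (lift G)" "w2 \<in> fst (lift G)"
      "x \<in> tot G {lift G} (lift G) w1" "y \<in> tot G {lift G} (lift G) w2" "(x, y) \<in> snd G"
      for w1 w2 x y
      using that unfolding fst_lift snd_lift by auto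
  qed (auto simp: fst_lift no_branch)
qed

lemma split_dec_faithful:
  assumes "split_dec G D" "graph G" "Q \<in> D"
  shows "faithful_node G D Q"
  using assms
proof (induction arbitrary: Q rule: split_dec.induct)
  case init
  then show ?case using faithful_lift by simp
next
  case (step D H V1 V2 m)
  show ?case
    by (rule faithful_split_step[OF step.prems(1) step.IH[OF step.prems(1)] step.hyps(2-4) step.prems(2)])
qed

lemma split_decomposition_act_complete:
  assumes "graph G" "split_decomposition G D" "P \<in> D" "(w1, w2) \<in> snd P"
    and "x \<in> act G D P w1" "y \<in> act G D P w2"
  shows "(x, y) \<in> snd G"
proof -
  have "split_dec G D" using assms(2) unfolding split_decomposition_def by blast
  then interpret P: faithful_node G D P using split_dec_faithful assms(1,3) by blast
  show ?thesis using P.act_complete assms(4-6) .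
qed

lemma mm_ge_card_cross_matching:
  assumes "graph G" "cross_matching G X M"
  shows "card M \<le> mm G X"
proof -
  have "finite (snd G)" using assms(1) unfolding graph_def by (meson finite_SigmaI finite_subset)
  moreover have "{card M | M. cross_matching G X M} \<subseteq> card ` Pow (snd G)"
  proof
    fix n assume "n \<in> {card M | M. cross_matching G X M}"
    then obtain M' where "n = card M'" "cross_matching G X M'" by blast
    moreover have "M' \<subseteq> snd G" using \<open>cross_matching G X M'\<close> unfolding cross_matching_def by auto
    ultimately show "n \<in> card ` Pow (snd G)" by blast
  qed
  ultimately have "finite {card M | M. cross_matching G X M}" using finite_subset by blast
  then show ?thesis unfolding mm_def using assms(2) by (intro Max_ge) auto
qed

lemma mm_ge_complete_cross_sets:
  assumes "graph G" "A \<subseteq> X" "B \<subseteq> fst G - X" "\<And>x y. x \<in> A \<Longrightarrow> y \<in> B \<Longrightarrow> (x, y) \<in> snd G"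
    and "k \<le> card A" "k \<le> card B"
  shows "k \<le> mm G X"
proof -
  obtain A' where A': "A' \<subseteq> A" "card A' = k" "finite A'"
    using obtain_subset_with_card_n[OF assms(5)] by blast
  obtain B' where B': "B' \<subseteq> B" "card B' = k" "finite B'"
    using obtain_subset_with_card_n[OF assms(6)] by blast
  obtain f where f: "bij_betw f A' B'" using finite_same_card_bij A' B' by metis
  define M where "M = (\<lambda>x. (x, f x)) ` A'"
  have "card M = k" unfolding M_def using A'(2) by (subst card_image) (auto simp: inj_on_def)
  moreover have "cross_matching G X M"
    unfolding cross_matching_def
  proof (intro conjI)
    have "f x \<in> B" if "x \<in> A'" for x using f B'(1) that by (auto simp: bij_betw_def)
    then show "\<forall>(x, y)\<in>M. (x, y) \<in> snd G \<and> x \<in> X \<and> y \<in> fst G - X"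
      unfolding M_def using assms(2-4) A'(1) by blast
    show "\<forall>(x, y)\<in>M. \<forall>(x', y')\<in>M. x = x' \<longleftrightarrow> y = y'"
      using f unfolding M_def bij_betw_def inj_on_def by auto
  qed
  ultimately show ?thesis using mm_ge_card_cross_matching[OF assms(1)] by metis
qed

lemma sm_edge_cut_le_branch_smw:
  assumes "branch_decomposition G T \<delta>" "(u, v) \<in> snd T"
  shows "sm G (edge_cut T \<delta> u v) \<le> branch_smw G T \<delta>"
proof -
  have "finite (snd T)"
    using assms(1) unfolding branch_decomposition_def tree_def graph_def
    by (meson finite_SigmaI finite_subset)
  moreover have "{sm G (edge_cut T \<delta> u v) | u v. (u, v) \<in> snd T}
      \<subseteq> (\<lambda>(u, v). sm G (edge_cut T \<delta> u v)) ` snd T"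
    by force
  ultimately have "finite ({sm G (edge_cut T \<delta> u v) | u v. (u, v) \<in> snd T} \<union> {0})"
    using finite_subset by blast
  then show ?thesis unfolding branch_smw_def using assms(2) by (intro Max_ge) blast+
qed

theorem mainTheorem3:
  fixes G :: "'a graph" and D :: "('a + nat) graph set" and P :: "('a + nat) graph"
    and k :: nat and T :: "'t graph" and \<delta> :: "'t \<Rightarrow> 'a" and a :: "'a + nat"
    and u v :: 't and X Y :: "'a set"
  assumes "graph G"
    and "split_decomposition G D" and "P \<in> D" and "card (fst P) > 3"
    and "k > 0"
    and "branch_decomposition G T \<delta>" and "branch_smw G T \<delta> < k"
    and "a \<in> fst P"
    and "(u, v) \<in> snd T" and "X = edge_cut T \<delta> u v" and "Y = fst G - X"
    and "card (X \<inter> act G D P a) \<ge> k"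
    and "card (Y \<inter> act_set G D P (nbr P a)) \<ge> k"
  shows "is_split G X Y"
proof (rule ccontr)
  assume "\<not> is_split G X Y"
  then have "sm G X = mm G X" using assms(11) by (simp add: sm_def)
  moreover have "k \<le> mm G X"
  proof (rule mm_ge_complete_cross_sets[OF assms(1) _ _ _ assms(12,13)])
    show "Y \<inter> act_set G D P (nbr P a) \<subseteq> fst G - X" using assms(11) by blast
    show "(x, y) \<in> snd G" if "x \<in> X \<inter> act G D P a" "y \<in> Y \<inter> act_set G D P (nbr P a)" for x y
      using that split_decomposition_act_complete[OF assms(1-3)] unfolding act_set_def nbr_def by blast
  qed blast
  moreover have "sm G X \<le> branch_smw G T \<delta>"
    using sm_edge_cut_le_branch_smw[OF assms(6,9)] assms(10) by simp
  ultimately show False using assms(7) by linarith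
qed

end
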